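(* If $k \geq 9$ and $|q - q_k| < q_k^{-2k-6}$, then $d_{\mathrm{H}}\big(g_{q,k}(\pi_q(A_q)),\ g_{q_k,k}(\pi_{q_k}(A_{q_k}))\big) < q_k^{-2k-4}$.
   Context: $q_k$ is the unique root in $(1,2)$ of $x^k - x^{k-1} - \cdots - x - 1 = 0$. $\pi_q((\epsilon_j)_{j\ge1}) = \sum_{j\ge1}\epsilon_j q^{-j}$ (for sequences over $\{-1,0,1\}$). $g_{q,k}(x) = q^{-k}x + \sum_{j=1}^{k-1}q^{-j}$. $d_{\mathrm{H}}$ is the Hausdorff distance. $W_2 = \{(-1\,0),(0\,{-1}),(00),(01),(10)\}$ and $1^k0^{k+4}W_2^\mathbb{N}$ is the set of sequences over $\{-1,0,1\}$ starting with $k$ ones then $k+4$ zeros whose tail is an infinite concatenation of words from $W_2$. Construction of $A_p$ from a fixed expansion of 1: given $(c_j) \in \{-1,0,1\}^\mathbb{N}$ with $\pi_p((c_j)) = 1$, let $J = \{j : c_j = 0\}$ enumerated $j_0<j_1<\cdots$, $J_{\mathrm{fixed},1} = \{j_n : n=4m+1, m\ge0\}$, $J_{\mathrm{fixed},0} = \{j_n : n = 4m+3, m\ge0\}$; $A_p$ is the set of $(a_j) \in \{0,1\}^\mathbb{N}$ with $a_j = 1$ if $c_j = 1$, $a_j = 0$ if $c_j = -1$, $a_j = 1$ if $j\in J_{\mathrm{fixed},1}$, $a_j = 0$ if $j \in J_{\mathrm{fixed},0}$. Here $A_{q_k}$ is built from $(c_j) = 1^k0^\infty$, and $A_q$ is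 built from an arbitrarily chosen sequence $(c_j) \in 1^k0^{k+4}W_2^\mathbb{N}$ with $\pi_q((c_j)) = 1$ (such a sequence exists for these $k,q$). *)

theory Defs
  imports "HOL-Analysis.Analysis"
begin

definition qk :: "nat \<Rightarrow> real" where
  "qk k = (THE x. 1 < x \<and> x < 2 \<and> x ^ k - (\<Sum>i<k. x ^ i) = 0)"

text \<open>Sequences are 0-indexed: c j stands for the paper's epsilon_(j+1).
  pi_q(eps) = sum_(j>=1) eps_j q^(-j) = sum_(j>=0) c j q^(-(j+1)).\<close>
definition pi_q :: "real \<Rightarrow> (nat \<Rightarrow> int) \<Rightarrow> real" where
  "pi_q q c = (\<Sum>j. real_of_int (c j) / q ^ (Suc j))"

definition g_qk :: "real \<Rightarrow> nat \<Rightarrow> real \<Rightarrow> real" where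
  "g_qk q k x = x / q ^ k + (\<Sum>j\<in>{1..<k}. 1 / q ^ j)"

definition hausdorff_dist :: "'a::metric_space set \<Rightarrow> 'a set \<Rightarrow> real" where
  "hausdorff_dist A B = max (SUP a\<in>A. infdist a B) (SUP b\<in>B. infdist b A)"

definition W2 :: "(int \<times> int) set" where
  "W2 = {(-1, 0), (0, -1), (0, 0), (0, 1), (1, 0)}"

text \<open>1^k 0^(k+4) W_2^N (0-indexed positions).\<close>
definition seqs_W2 :: "nat \<Rightarrow> (nat \<Rightarrow> int) set" where
  "seqs_W2 k = {c. (\<forall>j<k. c j = 1) \<and> (\<forall>j. k \<le> j \<and> j < 2 * k + 4 \<longrightarrow> c j = 0)
      \<and> (\<forall>m. (c (2 * k + 4 + 2 * m), c (2 * k + 4 + 2 * m + 1)) \<in> W2)}"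

definition ones_then_zeros :: "nat \<Rightarrow> nat \<Rightarrow> int" where
  "ones_then_zeros k j = (if j < k then 1 else 0)"

text \<open>J = zero positions; the position j = j_n has index n = #{i in J. i < j}.\<close>
definition zero_index :: "(nat \<Rightarrow> int) \<Rightarrow> nat \<Rightarrow> nat" where
  "zero_index c j = card {i. i < j \<and> c i = 0}"

definition J_fixed1 :: "(nat \<Rightarrow> int) \<Rightarrow> nat set" where
  "J_fixed1 c = {j. c j = 0 \<and> zero_index c j mod 4 = 1}"

definition J_fixed0 :: "(nat \<Rightarrow> int) \<Rightarrow> nat set" where
  "J_fixed0 c = {j. c j = 0 \<and> zero_index c j mod 4 = 3}"

definition A_set :: "(nat \<Rightarrow> int) \<Rightarrow> (nat \<Rightarrow> int) set" where
  "A_set c = {a. (\<forall>j. a j \<in> {0, 1})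
      \<and> (\<forall>j. c j = 1 \<longrightarrow> a j = 1)
      \<and> (\<forall>j. c j = -1 \<longrightarrow> a j = 0)
      \<and> (\<forall>j\<in>J_fixed1 c. a j = 1)
      \<and> (\<forall>j\<in>J_fixed0 c. a j = 0)}"

end

theory Submission
  imports Defs
begin

(* Prepending the word 1^(k-1) 0 to a q-expansion is exactly the map g_(q,k), so both sets
   consist of values pi_q of {0,1}-sequences.  Only the first 2k+4 digits of c enter the proof: there c agrees
   with 1^k 0^infinity, so the forced and free positions of A_q and A_(q_k) coincide, and every
   sequence of one set can be matched with one of the other sharing its first 3k+4 digits after
   prepending.  Changing the base from q to q_k moves the common prefix by at most
   |q - q_k| / (r - 1)^2 for r = 1.8 (termwise mean value bound and sum (n+1) s^n = (1-s)^-2),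
   and the two tails differ by at most r^-(3k+4) / (r - 1); for k >= 4 each of these is below
   half of q_k^-(2k+4). *)

lemma sum_inverse_powers_strict_antimono:
  fixes x y :: real
  assumes "1 < x" "x < y" "1 \<le> k"
  shows "(\<Sum>i<k. 1 / y ^ (k - i)) < (\<Sum>i<k. 1 / x ^ (k - i))"
proof (rule sum_strict_mono)
  fix i assume "i \<in> {..<k}"
  then have "x ^ (k - i) < y ^ (k - i)" using assms by (intro power_strict_mono) auto
  then show "1 / y ^ (k - i) < 1 / x ^ (k - i)" using assms
    by (intro divide_strict_left_mono) auto
qed (use assms in \<open>auto simp: lessThan_empty_iff\<close>)

lemma qk_equation_iff:
  fixes x :: real
  assumes "0 < x"
  shows "x ^ k - (\<Sum>i<k. x ^ i) = 0 \<longleftrightarrow> (\<Sum>i<k. 1 / x ^ (k - i)) = 1"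
proof -
  have "(\<Sum>i<k. 1 / x ^ (k - i)) = (\<Sum>i<k. x ^ i / x ^ k)"
  proof (rule sum.cong)
    fix i assume "i \<in> {..<k}"
    then have "x ^ k = x ^ i * x ^ (k - i)" by (simp flip: power_add)
    then show "1 / x ^ (k - i) = x ^ i / x ^ k" using assms by (simp add: field_simps)
  qed simp
  also have "\<dots> = (\<Sum>i<k. x ^ i) / x ^ k" by (simp add: sum_divide_distrib)
  finally show ?thesis using assms by (simp add: divide_eq_1_iff)
qed

lemma qk_eqI:
  fixes x :: real
  assumes "1 < x" "x < 2" "x ^ k - (\<Sum>i<k. x ^ i) = 0"
  shows "qk k = x"
  unfolding qk_def
proof (rule the_equality)
  fix y :: real assume y: "1 < y \<and> y < 2 \<and> y ^ k - (\<Sum>i<k. y ^ i) = 0"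
  have "(\<Sum>i<k. 1 / y ^ (k - i)) = 1" "(\<Sum>i<k. 1 / x ^ (k - i)) = 1"
    using y assms qk_equation_iff by auto
  moreover from this have "1 \<le> k" by (cases k) auto
  ultimately show "y = x"
    using sum_inverse_powers_strict_antimono[of x y k] sum_inverse_powers_strict_antimono[of y x k]
      y assms by (cases y x rule: linorder_cases) auto
qed (use assms in auto)

lemma qk_bounds:
  assumes "4 \<le> k"
  shows "1.9 \<le> qk k" "qk k < 2"
proof -
  define f where "f x = x ^ k - (\<Sum>i<k. x ^ i)" for x :: real
  have f_geometric: "f x * (x - 1) = x ^ k * (x - 2) + 1" if "1 < x" for x
    using that geometric_sum[of x k] by (simp add: f_def field_simps)
  have "(1.9::real) ^ 4 \<le> 1.9 ^ k" using assms by (intro power_increasing) auto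
  moreover have "10 < (1.9::real) ^ 4" by (simp add: power_divide)
  ultimately have "10 < (1.9::real) ^ k" by linarith
  then have "f 1.9 * (1.9 - 1) < 0" using f_geometric[of "1.9"] by simp
  then have "f 1.9 \<le> 0" by (simp add: mult_less_0_iff)
  moreover have "f 2 = 1" using f_geometric[of 2] by simp
  moreover have "continuous_on {1.9..2} f" unfolding f_def by (intro continuous_intros)
  ultimately obtain x where x: "1.9 \<le> x" "x \<le> 2" "f x = 0"
    using IVT'[of f "1.9" 0 2] by auto
  with \<open>f 2 = 1\<close> have "x < 2" by (cases "x = 2") auto
  with x have "qk k = x" by (intro qk_eqI) (auto simp: f_def)
  with x \<open>x < 2\<close> show "1.9 \<le> qk k" "qk k < 2" by auto
qed

lemma summable_pi_q:
  assumes "1 < q" "\<And>j. \<bar>c j\<bar> \<le> 1"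
  shows "summable (\<lambda>j. real_of_int (c j) / q ^ Suc j)"
proof (rule summable_comparison_test')
  show "summable (\<lambda>j. (1 / q) ^ Suc j)"
    using summable_ignore_initial_segment[OF summable_geometric[of "1 / q"], of 1] assms by simp
  fix j
  have "\<bar>real_of_int (c j)\<bar> \<le> 1" using assms(2)[of j] by linarith
  then have "\<bar>real_of_int (c j)\<bar> / q ^ Suc j \<le> 1 / q ^ Suc j"
    using assms(1) by (intro divide_right_mono) auto
  then show "norm (real_of_int (c j) / q ^ Suc j) \<le> (1 / q) ^ Suc j"
    using assms(1) by (simp add: abs_divide power_one_over)
qed

lemma pi_q_tail_bounds:
  fixes q :: real and N :: nat
  assumes q: "1 < q" and binary: "\<And>j. a j \<in> {0, 1}"
  defines "T \<equiv> pi_q q a - (\<Sum>j<N. real_of_int (a j) / q ^ Suc j)"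
  shows "0 \<le> T" "T \<le> 1 / (q ^ N * (q - 1))"
proof -
  define f where "f j = real_of_int (a j) / q ^ Suc j" for j
  have f_bounds: "0 \<le> f j" "f j \<le> (1 / q) ^ Suc j" for j
    using binary[of j] q by (auto simp: f_def power_one_over)
  have "\<bar>a j\<bar> \<le> 1" for j using binary[of j] by auto
  then have "summable f" unfolding f_def using q by (intro summable_pi_q)
  then have summable_tail: "summable (\<lambda>n. f (n + N))" by (rule summable_ignore_initial_segment)
  have "pi_q q a = suminf f" by (simp add: pi_q_def f_def[abs_def])
  then have T: "T = (\<Sum>n. f (n + N))"
    using suminf_split_initial_segment[OF \<open>summable f\<close>, of N] by (simp add: T_def f_def)
  have geometric: "(\<lambda>n. (1 / q) ^ Suc (n + N)) sums (1 / (q ^ N * (q - 1)))"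
  proof -
    have "(\<lambda>n. (1 / q) ^ Suc N * (1 / q) ^ n) sums ((1 / q) ^ Suc N * (1 / (1 - 1 / q)))"
      using q by (intro sums_mult geometric_sums) auto
    moreover have "(1 / q) ^ Suc N * (1 / (1 - 1 / q)) = 1 / (q ^ N * (q - 1))"
      using q by (simp add: field_simps power_one_over)
    ultimately show ?thesis by (simp add: power_add mult.commute)
  qed
  show "0 \<le> T" unfolding T using summable_tail f_bounds by (intro suminf_nonneg) auto
  show "T \<le> 1 / (q ^ N * (q - 1))"
    unfolding T using summable_tail geometric f_bounds by (intro sums_le[OF _ summable_sums]) auto
qed

definition g_digits :: "nat \<Rightarrow> (nat \<Rightarrow> int) \<Rightarrow> nat \<Rightarrow> int" where
  "g_digits k a j = (if j + 1 < k then 1 else if j + 1 = k then 0 else a (j - k))"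

lemma g_digits_prefix: "(\<Sum>j<k. real_of_int (g_digits k a j) / q ^ Suc j) = (\<Sum>j\<in>{1..<k}. 1 / q ^ j)"
proof (cases k)
  case (Suc m)
  have "(\<Sum>j<k. real_of_int (g_digits k a j) / q ^ Suc j) = (\<Sum>j<m. 1 / q ^ Suc j)"
    by (simp add: Suc g_digits_def)
  also have "\<dots> = (\<Sum>j\<in>{1..<k}. 1 / q ^ j)"
    unfolding Suc One_nat_def sum.shift_bounds_Suc_ivl by (simp add: atLeast0LessThan)
  finally show ?thesis .
qed simp

lemma g_qk_pi_q:
  assumes q: "1 < q" and digits: "\<And>j. \<bar>a j\<bar> \<le> 1"
  shows "g_qk q k (pi_q q a) = pi_q q (g_digits k a)"
proof -
  define f where "f j = real_of_int (g_digits k a j) / q ^ Suc j" for j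
  have "\<bar>g_digits k a j\<bar> \<le> 1" for j using digits[of "j - k"] by (simp add: g_digits_def)
  then have "summable f" unfolding f_def using q by (intro summable_pi_q)
  have "(\<Sum>n. f (n + k)) = (\<Sum>n. real_of_int (a n) / q ^ Suc n / q ^ k)"
    by (simp add: f_def g_digits_def power_add mult_ac)
  also have "\<dots> = pi_q q a / q ^ k"
    unfolding pi_q_def using q digits by (intro suminf_divide summable_pi_q)
  finally have "pi_q q (g_digits k a) = pi_q q a / q ^ k + (\<Sum>j\<in>{1..<k}. 1 / q ^ j)"
    using suminf_split_initial_segment[OF \<open>summable f\<close>, of k] g_digits_prefix[of k a q]
    by (simp add: pi_q_def f_def[abs_def])
  then show ?thesis by (simp add: g_qk_def)
qed

lemma abs_power_diff_le:
  fixes u v s :: real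
  assumes "0 \<le> u" "0 \<le> v" "u \<le> s" "v \<le> s"
  shows "\<bar>u ^ Suc n - v ^ Suc n\<bar> \<le> real (Suc n) * s ^ n * \<bar>u - v\<bar>"
proof -
  have "\<bar>\<Sum>p<Suc n. u ^ p * v ^ (n - p)\<bar> \<le> (\<Sum>p<Suc n. s ^ p * s ^ (n - p))"
    using assms by (intro sum_abs[THEN order_trans] sum_mono)
      (auto simp: abs_mult intro!: mult_mono power_mono)
  also have "\<dots> = real (Suc n) * s ^ n" by (simp flip: power_add)
  finally have "\<bar>u - v\<bar> * \<bar>\<Sum>p<Suc n. u ^ p * v ^ (n - p)\<bar> \<le> \<bar>u - v\<bar> * (real (Suc n) * s ^ n)"
    by (rule mult_left_mono) simp
  then show ?thesis by (simp only: diff_power_eq_sum abs_mult mult_ac)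
qed

lemma abs_sum_power_diff_le:
  fixes u v s :: real and e :: "nat \<Rightarrow> real"
  assumes e: "\<And>j. \<bar>e j\<bar> \<le> 1" and uv: "0 \<le> u" "0 \<le> v" "u \<le> s" "v \<le> s" "s < 1"
  shows "\<bar>\<Sum>j<M. e j * (u ^ Suc j - v ^ Suc j)\<bar> \<le> \<bar>u - v\<bar> / (1 - s)\<^sup>2"
proof -
  have "\<bar>\<Sum>j<M. e j * (u ^ Suc j - v ^ Suc j)\<bar> \<le> (\<Sum>j<M. \<bar>u - v\<bar> * (real (Suc j) * s ^ j))"
  proof (intro sum_abs[THEN order_trans] sum_mono)
    fix j
    have "\<bar>e j * (u ^ Suc j - v ^ Suc j)\<bar> \<le> \<bar>u ^ Suc j - v ^ Suc j\<bar>"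
      using e[of j] by (simp add: abs_mult mult_left_le_one_le)
    then show "\<bar>e j * (u ^ Suc j - v ^ Suc j)\<bar> \<le> \<bar>u - v\<bar> * (real (Suc j) * s ^ j)"
      using abs_power_diff_le[OF uv(1-4), of j] by (simp add: mult_ac)
  qed
  also have "\<dots> \<le> \<bar>u - v\<bar> * (1 / (1 - s)\<^sup>2)"
    unfolding sum_distrib_left[symmetric] using uv geometric_deriv_sums[of s]
    by (intro mult_left_mono sum_le_suminf[THEN order_trans, OF sums_summable]) (auto simp: sums_iff)
  finally show ?thesis by simp
qed

lemma pi_q_perturbation:
  fixes x y r :: real
  assumes r: "1 < r" "r \<le> x" "r \<le> y"
    and a: "\<And>j. a j \<in> {0, 1}" and b: "\<And>j. b j \<in> {0, 1}" and agree: "\<And>j. j < M \<Longrightarrow> a j = b j"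
  shows "\<bar>pi_q x a - pi_q y b\<bar> \<le> \<bar>x - y\<bar> / (r - 1)\<^sup>2 + 1 / (r ^ M * (r - 1))"
proof -
  have digits: "\<bar>real_of_int (a j)\<bar> \<le> 1" for j using a[of j] by auto
  define Tx where "Tx = pi_q x a - (\<Sum>j<M. real_of_int (a j) / x ^ Suc j)"
  define Ty where "Ty = pi_q y b - (\<Sum>j<M. real_of_int (b j) / y ^ Suc j)"
  have tail_le: "1 / (z ^ M * (z - 1)) \<le> 1 / (r ^ M * (r - 1))" if "r \<le> z" for z
    using r that by (intro divide_left_mono mult_mono power_mono mult_pos_pos) auto
  have "0 \<le> Tx" "Tx \<le> 1 / (r ^ M * (r - 1))" "0 \<le> Ty" "Ty \<le> 1 / (r ^ M * (r - 1))"
    using pi_q_tail_bounds[of x a M] pi_q_tail_bounds[of y b M] tail_le[of x] tail_le[of y] r a b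
    by (auto simp: Tx_def Ty_def)
  then have tails: "\<bar>Tx - Ty\<bar> \<le> 1 / (r ^ M * (r - 1))" by linarith
  have "pi_q x a - pi_q y b
      = (\<Sum>j<M. real_of_int (a j) * ((1 / x) ^ Suc j - (1 / y) ^ Suc j)) + (Tx - Ty)"
    using agree by (simp add: Tx_def Ty_def sum_subtractf right_diff_distrib power_one_over)
  moreover have "\<bar>\<Sum>j<M. real_of_int (a j) * ((1 / x) ^ Suc j - (1 / y) ^ Suc j)\<bar>
      \<le> \<bar>1 / x - 1 / y\<bar> / (1 - 1 / r)\<^sup>2"
    using r digits by (intro abs_sum_power_diff_le) (auto simp: frac_le)
  moreover have "\<bar>1 / x - 1 / y\<bar> / (1 - 1 / r)\<^sup>2 \<le> \<bar>x - y\<bar> / (r - 1)\<^sup>2"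
  proof -
    have "\<bar>1 / x - 1 / y\<bar> = \<bar>x - y\<bar> / (x * y)"
      using r by (simp add: field_simps abs_divide abs_minus_commute)
    also have "\<dots> \<le> \<bar>x - y\<bar> / (r * r)"
      using r by (intro divide_left_mono mult_mono) auto
    finally have "\<bar>1 / x - 1 / y\<bar> / (1 - 1 / r)\<^sup>2 \<le> \<bar>x - y\<bar> / (r * r) / (1 - 1 / r)\<^sup>2"
      by (rule divide_right_mono) simp
    also have "\<dots> = \<bar>x - y\<bar> / (r - 1)\<^sup>2"
      using r by (simp add: field_simps power2_eq_square)
    finally show ?thesis .
  qed
  ultimately show ?thesis using tails by linarith
qed

lemma hausdorff_dist_le:
  fixes A B :: "'a::metric_space set"
  assumes "A \<noteq> {}" "B \<noteq> {}"
    and "\<And>a. a \<in> A \<Longrightarrow> \<exists>b\<in>B. dist a b \<le> D" and "\<And>b. b \<in> B \<Longrightarrow> \<exists>a\<in>A. dist b a \<le> D"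
  shows "hausdorff_dist A B \<le> D"
proof -
  have "infdist x Y \<le> D" if "\<exists>y\<in>Y. dist x y \<le> D" for x and Y :: "'a set"
    using that infdist_le order_trans by blast
  then show ?thesis
    unfolding hausdorff_dist_def using assms by (auto intro!: cSUP_least)
qed

lemma zero_index_cong: "(\<And>i. i < j \<Longrightarrow> c1 i = c2 i) \<Longrightarrow> zero_index c1 j = zero_index c2 j"
  unfolding zero_index_def by (rule arg_cong[where f = card]) auto

lemma A_set_binary: "a \<in> A_set c \<Longrightarrow> a j \<in> {0, 1}"
  unfolding A_set_def by blast

lemma A_set_nonempty: "A_set c \<noteq> {}"
proof -
  have "(\<lambda>j. if c j = 1 \<or> j \<in> J_fixed1 c then 1 else 0) \<in> A_set c"
    unfolding A_set_def J_fixed1_def J_fixed0_def by auto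
  then show ?thesis by blast
qed

lemma A_set_splice:
  assumes a: "a \<in> A_set c1" and agree: "\<And>i. i < N \<Longrightarrow> c1 i = c2 i"
  obtains b where "b \<in> A_set c2" "\<And>j. j < N \<Longrightarrow> b j = a j"
proof -
  obtain a' where a': "a' \<in> A_set c2" using A_set_nonempty by blast
  have "zero_index c1 j = zero_index c2 j" if "j < N" for j
    using that agree by (intro zero_index_cong) auto
  then have "(\<lambda>j. if j < N then a j else a' j) \<in> A_set c2"
    using a a' agree unfolding A_set_def J_fixed1_def J_fixed0_def by auto
  then show ?thesis by (rule that) simp
qed

lemma g_qk_pi_q_A_set_close:
  fixes x y r :: real
  assumes r: "1 < r" "r \<le> x" "r \<le> y" and agree: "\<And>i. i < N \<Longrightarrow> c1 i = c2 i"
    and a: "a \<in> A_set c1"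
  shows "\<exists>b\<in>A_set c2. \<bar>g_qk x k (pi_q x a) - g_qk y k (pi_q y b)\<bar>
           \<le> \<bar>x - y\<bar> / (r - 1)\<^sup>2 + 1 / (r ^ (N + k) * (r - 1))"
proof -
  obtain b where b: "b \<in> A_set c2" and ab: "\<And>j. j < N \<Longrightarrow> b j = a j"
    using A_set_splice[OF a agree] by blast
  have binary: "g_digits k a j \<in> {0, 1}" "g_digits k b j \<in> {0, 1}" for j
    using A_set_binary[OF a] A_set_binary[OF b] by (auto simp: g_digits_def)
  have digits: "\<bar>a j\<bar> \<le> 1" "\<bar>b j\<bar> \<le> 1" for j
    using A_set_binary[OF a, of j] A_set_binary[OF b, of j] by auto
  have "g_digits k a j = g_digits k b j" if "j < N + k" for j
    using that ab by (simp add: g_digits_def)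
  then have "\<bar>pi_q x (g_digits k a) - pi_q y (g_digits k b)\<bar>
      \<le> \<bar>x - y\<bar> / (r - 1)\<^sup>2 + 1 / (r ^ (N + k) * (r - 1))"
    using r binary by (intro pi_q_perturbation) auto
  moreover have "g_qk x k (pi_q x a) = pi_q x (g_digits k a)" "g_qk y k (pi_q y b) = pi_q y (g_digits k b)"
    using r digits by (auto intro!: g_qk_pi_q)
  ultimately show ?thesis using b by (intro bexI[of _ b]) simp_all
qed

lemma hausdorff_dist_g_qk_pi_q_A_set_le:
  fixes x y r :: real
  assumes r: "1 < r" "r \<le> x" "r \<le> y" and agree: "\<And>i. i < N \<Longrightarrow> c1 i = c2 i"
  shows "hausdorff_dist (g_qk x k ` pi_q x ` A_set c1) (g_qk y k ` pi_q y ` A_set c2)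
           \<le> \<bar>x - y\<bar> / (r - 1)\<^sup>2 + 1 / (r ^ (N + k) * (r - 1))"
proof (rule hausdorff_dist_le)
  fix u assume "u \<in> g_qk x k ` pi_q x ` A_set c1"
  then show "\<exists>v\<in>g_qk y k ` pi_q y ` A_set c2. dist u v
      \<le> \<bar>x - y\<bar> / (r - 1)\<^sup>2 + 1 / (r ^ (N + k) * (r - 1))"
    using g_qk_pi_q_A_set_close[OF r agree] by (fastforce simp: dist_real_def)
next
  fix v assume "v \<in> g_qk y k ` pi_q y ` A_set c2"
  then show "\<exists>u\<in>g_qk x k ` pi_q x ` A_set c1. dist v u
      \<le> \<bar>x - y\<bar> / (r - 1)\<^sup>2 + 1 / (r ^ (N + k) * (r - 1))"
    using g_qk_pi_q_A_set_close[OF r(1,3,2), of N c2 c1] agree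
    by (fastforce simp: dist_real_def abs_minus_commute[of x y])
qed (use A_set_nonempty in auto)

lemma error_terms_lt:
  fixes p q :: real
  assumes k: "4 \<le> k" and p: "1.9 \<le> p" "p < 2" and qp: "\<bar>q - p\<bar> < 1 / p ^ (2 * k + 6)"
  shows "1.8 \<le> q"
    and "\<bar>q - p\<bar> / (1.8 - 1)\<^sup>2 + 1 / (1.8 ^ (2 * k + 4 + k) * (1.8 - 1)) < 1 / p ^ (2 * k + 4)"
proof -
  define P where "P = p ^ (2 * k + 4)"
  obtain m where m: "k = m + 4" using k by (metis le_add_diff_inverse2)
  have "(1.9::real) ^ 4 \<le> 1.9 ^ (2 * k + 4)" by (intro power_increasing) auto
  also have "\<dots> \<le> P" unfolding P_def using p by (intro power_mono) auto
  finally have P_ge: "13 \<le> P" by (simp add: power_divide)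
  have "3.61 \<le> p\<^sup>2" using power_mono[OF p(1), of 2] by (simp add: power_divide)
  moreover have "p ^ (2 * k + 6) = p\<^sup>2 * P" unfolding P_def by (simp add: add.commute flip: power_add)
  ultimately have "3.61 * P \<le> p ^ (2 * k + 6)" using P_ge by (simp add: mult_right_mono)
  then have "1 / p ^ (2 * k + 6) \<le> 1 / (3.61 * P)" using P_ge by (intro divide_left_mono) auto
  with qp have qp_small: "\<bar>q - p\<bar> < 1 / (3.61 * P)" by linarith
  have "1 / (3.61 * P) \<le> 0.1" using P_ge by (simp add: field_simps)
  with qp_small p show "1.8 \<le> q" by linarith
  have term1: "\<bar>q - p\<bar> / (1.8 - 1)\<^sup>2 < 1 / (2 * P)"
    using qp_small P_ge by (simp add: field_simps)
  have "2 * P \<le> 2 * 2 ^ (2 * k + 4)" unfolding P_def using p by (intro mult_left_mono power_mono) auto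
  also have "\<dots> = 8192 * 4 ^ m" by (simp add: m power_add power_mult)
  also have "\<dots> \<le> 1.8 ^ 16 * (1.8 - 1) * (1.8 ^ 3) ^ m"
    by (intro mult_mono power_mono) (auto simp: power_divide)
  also have "\<dots> = 1.8 ^ (2 * k + 4 + k) * (1.8 - 1)"
    by (simp add: m power_add flip: power_mult)
  finally have term2: "1 / (1.8 ^ (2 * k + 4 + k) * (1.8 - 1)) \<le> 1 / (2 * P)"
    using P_ge by (intro divide_left_mono) auto
  show "\<bar>q - p\<bar> / (1.8 - 1)\<^sup>2 + 1 / (1.8 ^ (2 * k + 4 + k) * (1.8 - 1)) < 1 / p ^ (2 * k + 4)"
    using term1 term2 by (simp add: P_def)
qed

theorem lemma4p8:
  fixes k :: nat and q :: real and c :: "nat \<Rightarrow> int"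
  assumes "k \<ge> 9"
    and "\<bar>q - qk k\<bar> < 1 / (qk k) ^ (2 * k + 6)"
    and "c \<in> seqs_W2 k"
    and "pi_q q c = 1"
  shows "hausdorff_dist (g_qk q k ` pi_q q ` A_set c)
           (g_qk (qk k) k ` pi_q (qk k) ` A_set (ones_then_zeros k))
         < 1 / (qk k) ^ (2 * k + 4)"
proof -
  have k: "4 \<le> k" using assms(1) by simp
  note qk = qk_bounds[OF k]
  note numeric = error_terms_lt[OF k qk assms(2)]
  have "\<And>i. i < 2 * k + 4 \<Longrightarrow> c i = ones_then_zeros k i"
    using assms(3) by (simp add: seqs_W2_def ones_then_zeros_def)
  then have "hausdorff_dist (g_qk q k ` pi_q q ` A_set c)
           (g_qk (qk k) k ` pi_q (qk k) ` A_set (ones_then_zeros k))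
      \<le> \<bar>q - qk k\<bar> / (1.8 - 1)\<^sup>2 + 1 / (1.8 ^ (2 * k + 4 + k) * (1.8 - 1))"
    using numeric(1) qk by (intro hausdorff_dist_g_qk_pi_q_A_set_le) auto
  then show ?thesis using numeric(2) by linarith
qed

end
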